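(* Let $N\ge 1$ and let $A\subset\Gamma=\mathbb N_0^s$ satisfy \[ A\supseteq \bigcup_{j=1}^N\ \bigcup_{B\in L_j(\Gamma)} B , \] i.e. $A$ contains every lower set of cardinality at most $N$. Then $A$ is a monomial degree reducing universal interpolation set of order $N$.
   Context: $\Pi=\mathbb C[x_1,\dots,x_s]$, $\deg$ is total degree with $\deg 0<0$. For $A\subset\Gamma=\mathbb N_0^s$, $\Pi_A$ is the span of the monomials $x^\alpha$, $\alpha\in A$. A subspace $\mathcal P\subseteq\Pi$ is a degree reducing universal interpolation space of order $N$ if for every finite $X\subset\mathbb C^s$ with $\#X\le N$ and every $q\in\Pi$ there is $p\in\mathcal P$ with $p|_X=q|_X$ and $\deg p\le\deg q$. A set $A\subset\Gamma$ is a monomial degree reducing universal interpolation set of order $N$ if $\Pi_A$ is a degree reducing universal interpolation space of order $N$. For $\alpha,\beta\in\Gamma$, $\alpha\le\beta$ means $\alpha_j\le\beta_j$ for all $j$; $B\subset\Gamma$ is a lower set if $\alpha\in B$ and $\beta\le\alpha$ imply $\beta\in B$; $L_j(\Gamma)$ denotes the set of lower sets of cardinality $j$. *)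

theory Defs
  imports Complex_Main "HOL-Library.Poly_Mapping"
begin

text \<open>Variables are indexed by a finite type 'n (so s = CARD('n)); exponents
  (elements of Gamma = N_0^s) are functions 'n => nat; points of C^s are
  functions 'n => complex; a polynomial is a finitely supported coefficient map
  from exponents to complex numbers.\<close>

type_synonym 'n mpoly_c = "('n \<Rightarrow> nat) \<Rightarrow>\<^sub>0 complex"

definition monom_eval :: "('n::finite \<Rightarrow> nat) \<Rightarrow> ('n \<Rightarrow> complex) \<Rightarrow> complex" where
  "monom_eval \<alpha> x = (\<Prod>i\<in>UNIV. x i ^ \<alpha> i)"

definition peval :: "'n::finite mpoly_c \<Rightarrow> ('n \<Rightarrow> complex) \<Rightarrow> complex" where
  "peval p x = (\<Sum>\<alpha>\<in>Poly_Mapping.keys p. Poly_Mapping.lookup p \<alpha> * monom_eval \<alpha> x)"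

text \<open>Total degree, with deg 0 = -1 < 0.\<close>
definition tdeg :: "'n::finite mpoly_c \<Rightarrow> int" where
  "tdeg p = (if p = 0 then -1 else int (Max ((\<lambda>\<alpha>. \<Sum>i\<in>UNIV. \<alpha> i) ` Poly_Mapping.keys p)))"

definition mono_span :: "('n::finite \<Rightarrow> nat) set \<Rightarrow> 'n mpoly_c set" where
  "mono_span A = {p. Poly_Mapping.keys p \<subseteq> A}"

definition dr_univ_interp_space :: "'n::finite mpoly_c set \<Rightarrow> nat \<Rightarrow> bool" where
  "dr_univ_interp_space P N \<longleftrightarrow>
     (\<forall>X :: ('n \<Rightarrow> complex) set. \<forall>q. finite X \<and> card X \<le> N \<longrightarrow>
        (\<exists>p\<in>P. (\<forall>x\<in>X. peval p x = peval q x) \<and> tdeg p \<le> tdeg q))"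

definition mono_dr_univ_interp_set :: "('n::finite \<Rightarrow> nat) set \<Rightarrow> nat \<Rightarrow> bool" where
  "mono_dr_univ_interp_set A N \<longleftrightarrow> dr_univ_interp_space (mono_span A) N"

definition lower_set :: "('n \<Rightarrow> nat) set \<Rightarrow> bool" where
  "lower_set B \<longleftrightarrow> (\<forall>\<alpha>\<in>B. \<forall>\<beta>. \<beta> \<le> \<alpha> \<longrightarrow> \<beta> \<in> B)"

definition lower_sets_card :: "nat \<Rightarrow> ('n \<Rightarrow> nat) set set" where
  "lower_sets_card j = {B. lower_set B \<and> finite B \<and> card B = j}"

end

theory Submission
  imports Defs "HOL-Library.Function_Algebras" "HOL-Library.FuncSet" "HOL-Library.Countable"
begin

text \<open>Fix a graded monomial order \<open>\<prec>\<close> and call an exponent \<open>\<alpha>\<close> standard for \<open>X\<close> if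
  \<open>x\<^sup>\<alpha>|\<^sub>X\<close> is not a linear combination of the \<open>x\<^sup>\<beta>|\<^sub>X\<close> with \<open>\<beta> \<prec> \<alpha>\<close>.
  Standard exponents form a lower set, since multiplying such a relation for \<open>\<beta> \<le> \<alpha>\<close> by
  \<open>x\<^sup>\<alpha>\<^sup>-\<^sup>\<beta>\<close> gives one for \<open>\<alpha>\<close>. Their restrictions are linearly independent (the \<open>\<prec>\<close>-largest
  term of a relation would not be standard), so there are at most \<open>#X \<le> N\<close> of them and they
  lie in \<open>A\<close>. By well-founded induction every \<open>x\<^sup>\<alpha>|\<^sub>X\<close> is a combination of \<open>x\<^sup>\<beta>|\<^sub>X\<close> with
  \<open>\<beta>\<close> standard and \<open>\<beta> \<preceq> \<alpha>\<close>, hence \<open>deg \<beta> \<le> deg \<alpha>\<close>; applied to the monomials of \<open>q\<close>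
  this yields the degree reducing interpolant.\<close>

definition deg_exp :: "('n::finite \<Rightarrow> nat) \<Rightarrow> nat" where
  "deg_exp a = (\<Sum>i\<in>UNIV. a i)"

lemma deg_exp_add: "deg_exp (a + e) = deg_exp a + deg_exp e"
  by (simp add: deg_exp_def sum.distrib)

lemma finite_deg_exp_le: "finite {a :: 'n::finite \<Rightarrow> nat. deg_exp a \<le> d}"
proof (rule finite_subset)
  show "{a :: 'n \<Rightarrow> nat. deg_exp a \<le> d} \<subseteq> Pi\<^sub>E UNIV (\<lambda>_. {..d})"
  proof
    fix a :: "'n \<Rightarrow> nat"
    assume "a \<in> {a. deg_exp a \<le> d}"
    then have "a i \<le> d" for i
      using member_le_sum[of i UNIV a] by (simp add: deg_exp_def)
    then show "a \<in> Pi\<^sub>E UNIV (\<lambda>_. {..d})"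
      by (simp add: PiE_UNIV_domain)
  qed
  show "finite (Pi\<^sub>E (UNIV :: 'n set) (\<lambda>_. {..d}))"
    by (simp add: finite_PiE)
qed

lemma tdeg_le_iff:
  assumes "d \<ge> -1"
  shows "tdeg p \<le> d \<longleftrightarrow> (\<forall>a\<in>Poly_Mapping.keys p. int (deg_exp a) \<le> d)"
proof (cases "p = 0")
  case False
  let ?D = "deg_exp ` Poly_Mapping.keys p"
  have fin: "finite ?D" "?D \<noteq> {}"
    using False by auto
  then have "Max ?D \<in> ?D"
    by (rule Max_in)
  then obtain m where m: "Max ?D = deg_exp m" "m \<in> Poly_Mapping.keys p"
    by (rule imageE)
  have "tdeg p = int (Max ?D)"
    using False by (simp add: tdeg_def deg_exp_def[abs_def])
  then have tdeg_p: "tdeg p = int (deg_exp m)"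
    by (simp only: m(1))
  have "deg_exp a \<le> deg_exp m" if "a \<in> Poly_Mapping.keys p" for a
    using Max_ge[OF fin(1)] m(1) that by simp
  then show ?thesis
    unfolding tdeg_p using m(2) by (meson of_nat_le_iff order_trans)
next
  case True
  then show ?thesis
    using assms by (simp add: tdeg_def)
qed

definition rank_lex_less :: "('n::finite \<Rightarrow> nat) \<Rightarrow> ('n \<Rightarrow> nat) \<Rightarrow> bool" where
  "rank_lex_less b a \<longleftrightarrow> (\<exists>i. b i < a i \<and> (\<forall>j. to_nat j < to_nat i \<longrightarrow> b j = a j))"

lemma rank_lex_less_trans:
  fixes a b c :: "'n::finite \<Rightarrow> nat"
  assumes "rank_lex_less a b" "rank_lex_less b c"
  shows "rank_lex_less a c"
proof -
  obtain i where i: "a i < b i" "\<And>j. to_nat j < to_nat i \<Longrightarrow> a j = b j"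
    using assms(1) unfolding rank_lex_less_def by blast
  obtain k where k: "b k < c k" "\<And>j. to_nat j < to_nat k \<Longrightarrow> b j = c j"
    using assms(2) unfolding rank_lex_less_def by blast
  define m where "m = (if to_nat i \<le> to_nat k then i else k)"
  have below_m: "to_nat j < to_nat i \<and> to_nat j < to_nat k" if "to_nat j < to_nat m" for j :: 'n
    using that by (auto simp: m_def split: if_splits)
  have "a m < c m"
  proof (cases "to_nat i" "to_nat k" rule: linorder_cases)
    case less
    then show ?thesis using i(1) k(2)[of i] by (simp add: m_def)
  next
    case equal
    then show ?thesis using i(1) k(1) by (simp add: m_def)
  next
    case greater
    then show ?thesis using i(2)[of k] k(1) by (simp add: m_def)
  qed
  moreover have "a j = c j" if "to_nat j < to_nat m" for j :: 'n
    using below_m[OF that] i(2) k(2) by simp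
  ultimately show ?thesis
    unfolding rank_lex_less_def by (intro exI[of _ m]) simp
qed

lemma rank_lex_less_linear:
  assumes "a \<noteq> b"
  shows "rank_lex_less a b \<or> rank_lex_less b a"
proof -
  define D where "D = {i. a i \<noteq> b i}"
  have "Min (to_nat ` D) \<in> to_nat ` D"
    using assms by (intro Min_in) (auto simp: D_def)
  then obtain i where "i \<in> D" and i_min: "to_nat i = Min (to_nat ` D)"
    by auto
  have "a j = b j" if "to_nat j < to_nat i" for j
  proof (rule ccontr)
    assume "a j \<noteq> b j"
    then have "to_nat i \<le> to_nat j"
      unfolding i_min by (intro Min_le) (auto simp: D_def)
    with that show False by simp
  qed
  moreover have "a i < b i \<or> b i < a i"
    using \<open>i \<in> D\<close> by (auto simp: D_def)
  ultimately show ?thesis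
    unfolding rank_lex_less_def by auto
qed

definition grlex_less :: "('n::finite \<Rightarrow> nat) \<Rightarrow> ('n \<Rightarrow> nat) \<Rightarrow> bool" where
  "grlex_less b a \<longleftrightarrow> deg_exp b < deg_exp a \<or> (deg_exp b = deg_exp a \<and> rank_lex_less b a)"

lemma grlex_less_irrefl: "\<not> grlex_less a a"
  by (auto simp: grlex_less_def rank_lex_less_def)

lemma grlex_less_imp_deg_exp_le: "grlex_less b a \<Longrightarrow> deg_exp b \<le> deg_exp a"
  by (auto simp: grlex_less_def)

lemma grlex_less_add_right: "grlex_less b a \<Longrightarrow> grlex_less (b + e) (a + e)"
  by (auto simp: grlex_less_def rank_lex_less_def deg_exp_add)

lemma grlex_less_trans: "grlex_less a b \<Longrightarrow> grlex_less b c \<Longrightarrow> grlex_less a c"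
  unfolding grlex_less_def using rank_lex_less_trans[of a b c] by auto

lemma grlex_less_linear: "a \<noteq> b \<Longrightarrow> grlex_less a b \<or> grlex_less b a"
  using rank_lex_less_linear[of a b]
  by (cases "deg_exp a" "deg_exp b" rule: linorder_cases) (auto simp: grlex_less_def)

lemma wf_grlex_less: "wf {(b, a). grlex_less b a}"
proof (rule wf_subset[OF wf_measure[of "\<lambda>a. card {c. grlex_less c a}"]], clarify)
  fix b a assume ba: "grlex_less b a"
  have "finite {c. grlex_less c a}"
    by (rule finite_subset[OF _ finite_deg_exp_le[of "deg_exp a"]])
      (auto dest: grlex_less_imp_deg_exp_le)
  moreover have "{c. grlex_less c b} \<subset> {c. grlex_less c a}"
  proof
    show "{c. grlex_less c b} \<subseteq> {c. grlex_less c a}"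
      using grlex_less_trans[OF _ ba] by blast
    show "{c. grlex_less c b} \<noteq> {c. grlex_less c a}"
      using ba grlex_less_irrefl[of b] by blast
  qed
  ultimately show "(b, a) \<in> measure (\<lambda>a. card {c. grlex_less c a})"
    by (simp add: psubset_card_mono)
qed

lemma finite_grlex_greatest:
  assumes "finite G" "G \<noteq> {}"
  obtains a where "a \<in> G" "\<And>b. b \<in> G \<Longrightarrow> b \<noteq> a \<Longrightarrow> grlex_less b a"
  using assms
proof (induction G arbitrary: thesis rule: finite_ne_induct)
  case (singleton x)
  then show ?case by blast
next
  case (insert x G)
  obtain a where a: "a \<in> G" "\<And>b. b \<in> G \<Longrightarrow> b \<noteq> a \<Longrightarrow> grlex_less b a"
    using insert.IH by blast
  show ?case
  proof (cases "grlex_less a x")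
    case True
    have "grlex_less b x" if "b \<in> G" for b
      using a that True grlex_less_trans[of b a x] by (cases "b = a") auto
    then show ?thesis
      using insert.prems[of x] by blast
  next
    case False
    then have "grlex_less x a"
      using grlex_less_linear[of x a] a(1) insert.hyps by auto
    then show ?thesis
      using insert.prems[of a] a by blast
  qed
qed

definition fscale :: "complex \<Rightarrow> ('x \<Rightarrow> complex) \<Rightarrow> 'x \<Rightarrow> complex" where
  "fscale c v = (\<lambda>x. c * v x)"

interpretation fun_space: vector_space "fscale :: complex \<Rightarrow> ('x \<Rightarrow> complex) \<Rightarrow> _"
  by unfold_locales (auto simp: fscale_def fun_eq_iff algebra_simps)

lemma sum_fun_apply: "(\<Sum>i\<in>A. g i) x = (\<Sum>i\<in>A. g i x)"
  by (induction A rule: infinite_finite_induct) auto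

lemma span_times_fun:
  assumes "v \<in> fun_space.span B"
  shows "v * h \<in> fun_space.span ((\<lambda>w. w * h) ` B)"
  using assms
proof (induction rule: fun_space.span_induct_alt)
  case base
  show ?case
    using fun_space.span_zero by (simp add: zero_fun_def)
next
  case (step c w u)
  have "(fscale c w + u) * h = fscale c (w * h) + u * h"
    by (simp add: fscale_def fun_eq_iff algebra_simps)
  moreover have "fscale c (w * h) + u * h \<in> fun_space.span ((\<lambda>w. w * h) ` B)"
    using step by (blast intro: fun_space.span_add fun_space.span_scale fun_space.span_base)
  ultimately show ?case
    by (simp only:)
qed

lemma span_point_indicators:
  assumes "finite X" "\<And>x. x \<notin> X \<Longrightarrow> v x = 0"
  shows "v \<in> fun_space.span ((\<lambda>y x. if x = y then 1 else 0) ` X)"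
proof -
  have "v = (\<Sum>y\<in>X. fscale (v y) (\<lambda>x. if x = y then 1 else 0))"
    using assms by (auto simp: fun_eq_iff sum_fun_apply fscale_def if_distrib cong: if_cong)
  also have "\<dots> \<in> fun_space.span ((\<lambda>y x. if x = y then 1 else 0) ` X)"
    by (intro fun_space.span_sum fun_space.span_scale fun_space.span_base) auto
  finally show ?thesis .
qed

text \<open>The restriction of \<open>x\<^sup>a\<close> to \<open>X\<close>, extended by \<open>0\<close> so that all these vectors lie in the
  span of the indicators of the points of \<open>X\<close>.\<close>

definition monom_on :: "('n::finite \<Rightarrow> complex) set \<Rightarrow> ('n \<Rightarrow> nat) \<Rightarrow> ('n \<Rightarrow> complex) \<Rightarrow> complex" where
  "monom_on X a = (\<lambda>x. if x \<in> X then monom_eval a x else 0)"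

lemma monom_on_add: "monom_on X (a + e) = monom_on X a * monom_eval e"
  by (simp add: monom_on_def monom_eval_def power_add prod.distrib fun_eq_iff)

definition standard_exps :: "('n::finite \<Rightarrow> complex) set \<Rightarrow> ('n \<Rightarrow> nat) set" where
  "standard_exps X = {a. monom_on X a \<notin> fun_space.span (monom_on X ` {b. grlex_less b a})}"

lemma lower_set_standard_exps: "lower_set (standard_exps X)"
  unfolding lower_set_def
proof (intro ballI allI impI)
  fix a b
  assume a: "a \<in> standard_exps X" and "b \<le> a"
  define e where "e = a - b"
  have a_eq: "a = b + e"
    using \<open>b \<le> a\<close> by (simp add: e_def le_fun_def fun_eq_iff)
  show "b \<in> standard_exps X"
  proof (rule ccontr)
    assume "b \<notin> standard_exps X"
    then have "monom_on X b * monom_eval e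
        \<in> fun_space.span ((\<lambda>w. w * monom_eval e) ` monom_on X ` {c. grlex_less c b})"
      unfolding standard_exps_def by (intro span_times_fun) simp
    moreover have "(\<lambda>w. w * monom_eval e) ` monom_on X ` {c. grlex_less c b}
        \<subseteq> monom_on X ` {c. grlex_less c a}"
      unfolding a_eq by (auto simp: monom_on_add[symmetric] intro: grlex_less_add_right)
    ultimately have "monom_on X a \<in> fun_space.span (monom_on X ` {c. grlex_less c a})"
      unfolding a_eq monom_on_add using fun_space.span_mono by blast
    with a show False
      by (simp add: standard_exps_def)
  qed
qed

lemma monom_on_in_span_standard_exps:
  "monom_on X a \<in> fun_space.span (monom_on X ` {b \<in> standard_exps X. b = a \<or> grlex_less b a})"
proof (induction a rule: wf_induct_rule[OF wf_grlex_less])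
  case (1 a)
  let ?below = "\<lambda>a. monom_on X ` {b \<in> standard_exps X. b = a \<or> grlex_less b a}"
  show ?case
  proof (cases "a \<in> standard_exps X")
    case True
    then show ?thesis
      by (intro fun_space.span_base) auto
  next
    case False
    have "monom_on X b \<in> fun_space.span (?below a)" if "grlex_less b a" for b
    proof -
      have "?below b \<subseteq> ?below a"
        using that grlex_less_trans[OF _ that] by auto
      then show ?thesis
        using 1 that fun_space.span_mono by blast
    qed
    then have "fun_space.span (monom_on X ` {b. grlex_less b a}) \<subseteq> fun_space.span (?below a)"
      by (intro fun_space.span_minimal fun_space.subspace_span) auto
    with False show ?thesis
      by (auto simp: standard_exps_def)
  qed
qed

lemma independent_monom_on_standard_exps:
  assumes "finite F" "F \<subseteq> standard_exps X"
  shows "inj_on (monom_on X) F \<and> fun_space.independent (monom_on X ` F)"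
  using assms
proof (induction F rule: finite_psubset_induct)
  case (psubset F)
  show ?case
  proof (cases "F = {}")
    case True
    then show ?thesis
      by (simp add: fun_space.independent_empty)
  next
    case False
    then obtain m where m: "m \<in> F" "\<And>b. b \<in> F \<Longrightarrow> b \<noteq> m \<Longrightarrow> grlex_less b m"
      using finite_grlex_greatest[OF psubset.hyps(1)] by blast
    define F' where "F' = F - {m}"
    have F: "F = insert m F'" "m \<notin> F'"
      using m(1) by (auto simp: F'_def)
    have IH: "inj_on (monom_on X) F'" "fun_space.independent (monom_on X ` F')"
      using psubset.IH[of F'] psubset.prems F by auto
    have "monom_on X ` F' \<subseteq> monom_on X ` {b. grlex_less b m}"
      using m(2) by (auto simp: F'_def)
    moreover have "monom_on X m \<notin> fun_space.span (monom_on X ` {b. grlex_less b m})"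
      using m(1) psubset.prems unfolding standard_exps_def by blast
    ultimately have new: "monom_on X m \<notin> fun_space.span (monom_on X ` F')"
      using fun_space.span_mono by blast
    then have "monom_on X m \<notin> monom_on X ` F'"
      using fun_space.span_base[of "monom_on X m" "monom_on X ` F'"] by blast
    moreover have "fun_space.independent (insert (monom_on X m) (monom_on X ` F'))"
      using new IH(2) by (rule fun_space.independent_insertI)
    ultimately show ?thesis
      using IH(1) F by simp
  qed
qed

lemma finite_card_standard_exps:
  assumes "finite X"
  shows "finite (standard_exps X) \<and> card (standard_exps X) \<le> card X"
proof -
  have card_le: "card F \<le> card X" if "finite F" "F \<subseteq> standard_exps X" for F
  proof -
    let ?\<delta> = "\<lambda>y x. if x = y then (1::complex) else 0"
    have "monom_on X ` F \<subseteq> fun_space.span (?\<delta> ` X)"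
      using span_point_indicators[OF assms] by (auto simp: monom_on_def)
    then have "card (monom_on X ` F) \<le> card (?\<delta> ` X)"
      using fun_space.independent_span_bound independent_monom_on_standard_exps[OF that] assms
      by blast
    also have "\<dots> \<le> card X"
      using assms by (rule card_image_le)
    finally show ?thesis
      using independent_monom_on_standard_exps[OF that] card_image[of "monom_on X" F] by simp
  qed
  have "finite (standard_exps X)"
  proof (rule ccontr)
    assume "infinite (standard_exps X)"
    then obtain F where "F \<subseteq> standard_exps X" "finite F" "card F = Suc (card X)"
      using infinite_arbitrarily_large by blast
    with card_le[of F] show False
      by simp
  qed
  with card_le show ?thesis
    by blast
qed

lemma exists_poly_with_coeffs:
  assumes "finite B"
  shows "\<exists>p. Poly_Mapping.keys p \<subseteq> B \<and> (\<forall>x. peval p x = (\<Sum>b\<in>B. c b * monom_eval b x))"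
proof -
  define p where "p = Abs_poly_mapping (\<lambda>b. if b \<in> B then c b else 0)"
  have lookup_p: "Poly_Mapping.lookup p = (\<lambda>b. if b \<in> B then c b else 0)"
    unfolding p_def using assms by (intro lookup_Abs_poly_mapping) (simp add: finite_subset)
  have keys_p: "Poly_Mapping.keys p \<subseteq> B"
    by (auto simp: in_keys_iff lookup_p split: if_splits)
  have "peval p x = (\<Sum>b\<in>B. c b * monom_eval b x)" for x
    unfolding peval_def
    by (rule sum.mono_neutral_cong_left[OF assms keys_p]) (auto simp: lookup_p in_keys_iff)
  with keys_p show ?thesis
    by blast
qed

definition poly_on :: "('n::finite \<Rightarrow> complex) set \<Rightarrow> 'n mpoly_c \<Rightarrow> ('n \<Rightarrow> complex) \<Rightarrow> complex" where
  "poly_on X q = (\<lambda>x. if x \<in> X then peval q x else 0)"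

lemma poly_on_eq_sum:
  "poly_on X q = (\<Sum>a\<in>Poly_Mapping.keys q. fscale (Poly_Mapping.lookup q a) (monom_on X a))"
proof
  fix x
  show "poly_on X q x = (\<Sum>a\<in>Poly_Mapping.keys q. fscale (Poly_Mapping.lookup q a) (monom_on X a)) x"
    by (cases "x \<in> X") (simp_all add: poly_on_def peval_def sum_fun_apply fscale_def monom_on_def)
qed

lemma poly_on_in_span_standard_exps:
  "poly_on X q \<in> fun_space.span (monom_on X ` {b \<in> standard_exps X. int (deg_exp b) \<le> tdeg q})"
  unfolding poly_on_eq_sum
proof (intro fun_space.span_sum fun_space.span_scale)
  fix a
  assume "a \<in> Poly_Mapping.keys q"
  then have "int (deg_exp a) \<le> tdeg q"
    using tdeg_le_iff[of "tdeg q" q] by (simp add: tdeg_def)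
  then have "{b \<in> standard_exps X. b = a \<or> grlex_less b a}
      \<subseteq> {b \<in> standard_exps X. int (deg_exp b) \<le> tdeg q}"
    using grlex_less_imp_deg_exp_le by fastforce
  then show "monom_on X a \<in> fun_space.span (monom_on X ` {b \<in> standard_exps X. int (deg_exp b) \<le> tdeg q})"
    using monom_on_in_span_standard_exps[of X a] fun_space.span_mono[OF image_mono] by blast
qed

lemma standard_exps_interpolant:
  assumes "finite X"
  obtains p where "Poly_Mapping.keys p \<subseteq> standard_exps X"
    "\<And>x. x \<in> X \<Longrightarrow> peval p x = peval q x" "tdeg p \<le> tdeg q"
proof -
  define B where "B = {b \<in> standard_exps X. int (deg_exp b) \<le> tdeg q}"
  have "finite B"
    using finite_card_standard_exps[OF assms] by (simp add: B_def)
  have inj: "inj_on (monom_on X) B"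
    using independent_monom_on_standard_exps[OF \<open>finite B\<close>] by (auto simp: B_def)
  obtain u where "poly_on X q = (\<Sum>v\<in>monom_on X ` B. fscale (u v) v)"
    using poly_on_in_span_standard_exps[of X q] fun_space.span_finite[OF finite_imageI[OF \<open>finite B\<close>]]
    unfolding B_def by blast
  also have "\<dots> = (\<Sum>b\<in>B. fscale (u (monom_on X b)) (monom_on X b))"
    using sum.reindex[OF inj] by simp
  finally have q: "poly_on X q = (\<Sum>b\<in>B. fscale (u (monom_on X b)) (monom_on X b))" .
  obtain p where p: "Poly_Mapping.keys p \<subseteq> B"
      "\<forall>x. peval p x = (\<Sum>b\<in>B. u (monom_on X b) * monom_eval b x)"
    using exists_poly_with_coeffs[OF \<open>finite B\<close>, of "\<lambda>b. u (monom_on X b)"] by blast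
  have "peval q x = peval p x" if "x \<in> X" for x
  proof -
    have "peval q x = poly_on X q x"
      using that by (simp add: poly_on_def)
    also have "\<dots> = (\<Sum>b\<in>B. u (monom_on X b) * monom_on X b x)"
      unfolding q sum_fun_apply by (simp add: fscale_def)
    also have "\<dots> = peval p x"
      using that by (simp add: p(2) monom_on_def)
    finally show ?thesis .
  qed
  moreover have "tdeg p \<le> tdeg q"
    using p(1) tdeg_le_iff[of "tdeg q" p] by (auto simp: B_def tdeg_def)
  moreover have "Poly_Mapping.keys p \<subseteq> standard_exps X"
    using p(1) by (auto simp: B_def)
  ultimately show thesis
    using that by auto
qed

lemma standard_exps_subset_small_lower_sets:
  assumes "finite X" "card X \<le> N"
  shows "standard_exps X \<subseteq> (\<Union>j\<in>{1..N}. \<Union>(lower_sets_card j))"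
proof (cases "standard_exps X = {}")
  case False
  have S: "finite (standard_exps X)" "card (standard_exps X) \<le> N"
    using finite_card_standard_exps[OF assms(1)] assms(2) by auto
  then have "card (standard_exps X) \<in> {1..N}"
    using False by (simp add: Suc_le_eq card_gt_0_iff)
  moreover have "standard_exps X \<in> lower_sets_card (card (standard_exps X))"
    using S(1) lower_set_standard_exps by (simp add: lower_sets_card_def)
  ultimately show ?thesis
    by blast
qed simp

theorem proposition19:
  fixes A :: "('n::finite \<Rightarrow> nat) set" and N :: nat
  assumes "N \<ge> 1"
    and "(\<Union>j\<in>{1..N}. \<Union>(lower_sets_card j :: ('n \<Rightarrow> nat) set set)) \<subseteq> A"
  shows "mono_dr_univ_interp_set A N"
  unfolding mono_dr_univ_interp_set_def dr_univ_interp_space_def mono_span_def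
proof (intro allI impI)
  fix X :: "('n \<Rightarrow> complex) set" and q :: "'n mpoly_c"
  assume X: "finite X \<and> card X \<le> N"
  then obtain p where p: "Poly_Mapping.keys p \<subseteq> standard_exps X"
      "\<forall>x\<in>X. peval p x = peval q x" "tdeg p \<le> tdeg q"
    using standard_exps_interpolant by metis
  moreover have "standard_exps X \<subseteq> A"
    using standard_exps_subset_small_lower_sets[of X N] X assms(2) by blast
  ultimately show "\<exists>p\<in>{p. Poly_Mapping.keys p \<subseteq> A}. (\<forall>x\<in>X. peval p x = peval q x) \<and> tdeg p \<le> tdeg q"
    by blast
qed

end
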